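(* Let $h,w\ge 4$ and $G=C_w(U)\sqcap C_h$ with $U=\{i\}$ for some $i\in\{1,\dots,w\}$. Then $Z(G)\le h+2$.
   Context: All graphs are finite, simple and undirected. Zero forcing: given a graph $G$ and a set $S\subseteq V(G)$ of initially filled vertices, the color change rule says that if a filled vertex $v$ has exactly one unfilled neighbor $u$, then $v$ forces $u$ to become filled. $S$ is a zero forcing set if repeatedly applying this rule eventually fills every vertex of $G$. The zero forcing number $Z(G)$ is the minimum cardinality of a zero forcing set of $G$. The cycle $C_n$ ($n\ge3$) has vertex set $\{1,\dots,n\}$ and edges $\{k,k+1\}$ for $1\le k\le n-1$ together with $\{n,1\}$. Generalized hierarchical product: for graphs $W,H$ and $U\subseteq V(W)$ (the root set), $W(U)\sqcap H$ is the graph with vertex set $V(W)\times V(H)$ in which $(x_1,y_1)$ and $(x_2,y_2)$ are adjacent iff either ($x_1=x_2\in U$ and $y_1y_2\in E(H)$) or ($y_1=y_2$ and $x_1x_2\in E(W)$). *)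

theory Defs
  imports Main
begin

text \<open>A finite simple graph is represented by a vertex set V and a symmetric,
irreflexive adjacency predicate E (only its restriction to V matters).\<close>

definition cycle_adj :: "nat \<Rightarrow> nat \<Rightarrow> nat \<Rightarrow> bool" where
  "cycle_adj n a b \<longleftrightarrow> a \<in> {1..n} \<and> b \<in> {1..n} \<and>
     (b = a + 1 \<or> a = b + 1 \<or> (a = n \<and> b = 1) \<or> (a = 1 \<and> b = n))"

definition cycle_verts :: "nat \<Rightarrow> nat set" where
  "cycle_verts n = {1..n}"

definition hprod_verts :: "'a set \<Rightarrow> 'b set \<Rightarrow> ('a \<times> 'b) set" where
  "hprod_verts VW VH = VW \<times> VH"

definition hprod_adj :: "('a \<Rightarrow> 'a \<Rightarrow> bool) \<Rightarrow> 'a set \<Rightarrow> ('b \<Rightarrow> 'b \<Rightarrow> bool)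
    \<Rightarrow> ('a \<times> 'b) \<Rightarrow> ('a \<times> 'b) \<Rightarrow> bool" where
  "hprod_adj EW U EH p q \<longleftrightarrow>
     (fst p = fst q \<and> fst p \<in> U \<and> EH (snd p) (snd q)) \<or>
     (snd p = snd q \<and> EW (fst p) (fst q))"

definition force_step :: "'v set \<Rightarrow> ('v \<Rightarrow> 'v \<Rightarrow> bool) \<Rightarrow> 'v set \<Rightarrow> 'v set \<Rightarrow> bool" where
  "force_step V E F F' \<longleftrightarrow>
     (\<exists>v\<in>F. \<exists>u. {w \<in> V. E v w \<and> w \<notin> F} = {u} \<and> F' = insert u F)"

definition zero_forcing_set :: "'v set \<Rightarrow> ('v \<Rightarrow> 'v \<Rightarrow> bool) \<Rightarrow> 'v set \<Rightarrow> bool" where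
  "zero_forcing_set V E S \<longleftrightarrow> S \<subseteq> V \<and> (\<exists>F. (force_step V E)\<^sup>*\<^sup>* S F \<and> V \<subseteq> F)"

definition zero_forcing_number :: "'v set \<Rightarrow> ('v \<Rightarrow> 'v \<Rightarrow> bool) \<Rightarrow> nat" where
  "zero_forcing_number V E = (LEAST k. \<exists>S. zero_forcing_set V E S \<and> card S = k)"

end

theory Submission imports Defs begin

text \<open>Start from the column next to the root column i, together with the root vertices
(i,1) and (i,2): h + 2 vertices. Off the root column a vertex (j,y) only sees its two neighbours
in its row copy of C_w, so once two consecutive vertices of a row are filled, the whole row fills
by walking around the cycle; this fills rows 1 and 2. With rows 1..y filled, (i,y) has (i,y+1) as
its only unfilled neighbour, and after forcing it row y+1 fills in the same way.\<close>

definition forces :: "'v set \<Rightarrow> ('v \<Rightarrow> 'v \<Rightarrow> bool) \<Rightarrow> 'v set \<Rightarrow> 'v set \<Rightarrow> bool" where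
  "forces V E S A \<longleftrightarrow> (\<exists>F. (force_step V E)\<^sup>*\<^sup>* S F \<and> A \<subseteq> F)"

lemma forces_refl: "forces V E S S"
  unfolding forces_def by blast

lemma forces_subset: "forces V E S A \<Longrightarrow> B \<subseteq> A \<Longrightarrow> forces V E S B"
  unfolding forces_def by blast

lemma forces_insert:
  assumes "forces V E S A" "v \<in> A" "u \<in> V" "E v u"
    and "\<And>x. x \<in> V \<Longrightarrow> E v x \<Longrightarrow> x = u \<or> x \<in> A"
  shows "forces V E S (insert u A)"
proof -
  obtain F where F: "(force_step V E)\<^sup>*\<^sup>* S F" "A \<subseteq> F"
    using assms(1) unfolding forces_def by blast
  show ?thesis
  proof (cases "u \<in> F")
    case True
    then show ?thesis using F unfolding forces_def by blast
  next
    case False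
    have "{x \<in> V. E v x \<and> x \<notin> F} = {u}" using assms F False by blast
    then have "force_step V E F (insert u F)"
      unfolding force_step_def using assms F by blast
    then show ?thesis using F unfolding forces_def by (meson insert_mono rtranclp.rtrancl_into_rtrancl)
  qed
qed

lemma forces_along_path:
  assumes "forces V E S A" "p 0 \<in> A" "p 1 \<in> A"
    and "\<And>k. 0 < k \<Longrightarrow> k \<le> n \<Longrightarrow> p (Suc k) \<in> V \<and> E (p k) (p (Suc k))"
    and "\<And>k x. 0 < k \<Longrightarrow> k \<le> n \<Longrightarrow> x \<in> V \<Longrightarrow> E (p k) x \<Longrightarrow> x = p (k - 1) \<or> x = p (Suc k)"
  shows "forces V E S (A \<union> p ` {..Suc n})"
  using assms(4,5)
proof (induction n)
  case 0
  have "A \<union> p ` {..Suc 0} = A" using assms(2,3) by (auto simp: le_Suc_eq)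
  then show ?case using assms(1) by simp
next
  case (Suc n)
  let ?B = "A \<union> p ` {..Suc n}"
  have "forces V E S (insert (p (Suc (Suc n))) ?B)"
  proof (rule forces_insert)
    show "forces V E S ?B" using Suc by simp
    show "p (Suc n) \<in> ?B" by simp
    show "p (Suc (Suc n)) \<in> V" "E (p (Suc n)) (p (Suc (Suc n)))" using Suc.prems(1) by auto
    show "x = p (Suc (Suc n)) \<or> x \<in> ?B" if "x \<in> V" "E (p (Suc n)) x" for x
      using Suc.prems(2)[OF _ _ that] by auto
  qed
  then show ?case by (simp add: atMost_Suc)
qed

lemma zero_forcing_number_le:
  assumes "S \<subseteq> V" "forces V E S V"
  shows "zero_forcing_number V E \<le> card S"
  using assms unfolding zero_forcing_number_def zero_forcing_set_def forces_def
  by (intro Least_le) blast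

definition cycle_walk :: "nat \<Rightarrow> nat \<Rightarrow> nat \<Rightarrow> nat" where
  "cycle_walk w i k = (i - 1 + k) mod w + 1"

lemma cycle_walk_in: "0 < w \<Longrightarrow> cycle_walk w i k \<in> cycle_verts w"
  unfolding cycle_walk_def cycle_verts_def by (auto simp: Suc_le_eq)

lemma cycle_walk_0: "i \<in> cycle_verts w \<Longrightarrow> cycle_walk w i 0 = i"
  unfolding cycle_walk_def cycle_verts_def by auto

lemma cycle_walk_Suc:
  "0 < w \<Longrightarrow> cycle_walk w i (Suc k) = (if cycle_walk w i k = w then 1 else cycle_walk w i k + 1)"
  unfolding cycle_walk_def by (simp add: mod_Suc)

lemma cycle_adj_walk_Suc: "3 \<le> w \<Longrightarrow> cycle_adj w (cycle_walk w i k) (cycle_walk w i (Suc k))"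
  using cycle_walk_in[of w i k] cycle_walk_in[of w i "Suc k"] cycle_walk_Suc[of w i k]
  unfolding cycle_adj_def cycle_verts_def by auto

lemma cycle_adj_walk_cases:
  "3 \<le> w \<Longrightarrow> cycle_adj w (cycle_walk w i (Suc k)) z \<Longrightarrow>
     z = cycle_walk w i k \<or> z = cycle_walk w i (Suc (Suc k))"
  using cycle_walk_in[of w i k] cycle_walk_Suc[of w i k] cycle_walk_Suc[of w i "Suc k"]
  unfolding cycle_adj_def cycle_verts_def by auto

lemma cycle_walk_neq_start:
  assumes "i \<in> cycle_verts w" "0 < k" "k < w"
  shows "cycle_walk w i k \<noteq> i"
proof -
  have "(i - 1 + k) mod w \<noteq> i - 1"
  proof (cases "i - 1 + k < w")
    case True
    then show ?thesis using assms(2) by simp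
  next
    case False
    moreover have "i - 1 + k - w < w" using assms by (auto simp: cycle_verts_def)
    ultimately have "(i - 1 + k) mod w = i - 1 + k - w"
      by (simp add: le_mod_geq)
    then show ?thesis using assms False by (simp add: cycle_verts_def)
  qed
  then show ?thesis unfolding cycle_walk_def using assms by (auto simp: cycle_verts_def)
qed

lemma cycle_walk_image:
  assumes "i \<in> cycle_verts w"
  shows "cycle_walk w i ` {..<w} = cycle_verts w"
proof
  show "cycle_walk w i ` {..<w} \<subseteq> cycle_verts w"
    using assms cycle_walk_in[of w i] by (auto simp: cycle_verts_def)
next
  show "cycle_verts w \<subseteq> cycle_walk w i ` {..<w}"
  proof
    fix z assume z: "z \<in> cycle_verts w"
    have "(i - 1 + (z + w - i) mod w) mod w = (i - 1 + (z + w - i)) mod w"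
      by (simp add: mod_add_right_eq)
    also have "\<dots> = (z - 1 + w) mod w" using assms z by (auto simp: cycle_verts_def)
    also have "\<dots> = (z - 1) mod w" by (rule mod_add_self2)
    also have "\<dots> = z - 1" using z by (intro mod_less) (auto simp: cycle_verts_def)
    finally have "cycle_walk w i ((z + w - i) mod w) = z"
      using z by (simp add: cycle_walk_def cycle_verts_def)
    moreover have "(z + w - i) mod w < w" using z by (simp add: cycle_verts_def)
    ultimately show "z \<in> cycle_walk w i ` {..<w}" by (metis imageI lessThan_iff)
  qed
qed

lemma hprod_adj_off_root:
  "fst p \<notin> U \<Longrightarrow> hprod_adj EW U EH p q \<longleftrightarrow> snd p = snd q \<and> EW (fst p) (fst q)"
  unfolding hprod_adj_def by auto

lemma hprod_forces_row:
  fixes w i :: nat and VH :: "'b set" and EH :: "'b \<Rightarrow> 'b \<Rightarrow> bool"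
  defines "V \<equiv> hprod_verts (cycle_verts w) VH"
    and "E \<equiv> hprod_adj (cycle_adj w) {i} EH"
  assumes w: "3 \<le> w" and i: "i \<in> cycle_verts w" and y: "y \<in> VH"
    and A: "forces V E S A" "(i, y) \<in> A" "(cycle_walk w i 1, y) \<in> A"
  shows "forces V E S (A \<union> cycle_verts w \<times> {y})"
proof -
  define p where "p k = (cycle_walk w i k, y)" for k
  have "forces V E S (A \<union> p ` {..Suc (w - 2)})"
  proof (rule forces_along_path)
    show "forces V E S A" "p 0 \<in> A" "p 1 \<in> A"
      using A cycle_walk_0[OF i] by (simp_all add: p_def)
  next
    fix k assume "0 < k" "k \<le> w - 2"
    then have off_root: "fst (p k) \<notin> {i}"
      using cycle_walk_neq_start[OF i] by (simp add: p_def)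
    show "p (Suc k) \<in> V \<and> E (p k) (p (Suc k))"
      using cycle_walk_in[of w i] cycle_adj_walk_Suc[OF w] w y off_root
      by (simp add: p_def V_def E_def hprod_verts_def hprod_adj_off_root)
    fix x assume "x \<in> V" "E (p k) x"
    then have "snd x = y" "cycle_adj w (cycle_walk w i k) (fst x)"
      using off_root by (simp_all add: E_def hprod_adj_off_root p_def)
    then show "x = p (k - 1) \<or> x = p (Suc k)"
      using cycle_adj_walk_cases[OF w, of i "k - 1" "fst x"] \<open>0 < k\<close>
      by (cases x) (simp add: p_def)
  qed
  moreover have "p ` {..Suc (w - 2)} = cycle_verts w \<times> {y}"
  proof -
    have "{..Suc (w - 2)} = {..<w}" using w by auto
    then show ?thesis using cycle_walk_image[OF i] by (auto simp: p_def)
  qed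
  ultimately show ?thesis by simp
qed

lemma hprod_forces_root_up:
  fixes w h i y :: nat
  defines "V \<equiv> hprod_verts (cycle_verts w) (cycle_verts h)"
    and "E \<equiv> hprod_adj (cycle_adj w) {i} (cycle_adj h)"
  assumes i: "i \<in> cycle_verts w" and y: "2 \<le> y" "y < h"
    and A: "forces V E S A" "cycle_verts w \<times> {1..y} \<subseteq> A"
  shows "forces V E S (insert (i, Suc y) A)"
proof (rule forces_insert[OF A(1)])
  show "(i, y) \<in> A" "(i, Suc y) \<in> V" "E (i, y) (i, Suc y)"
    using i y A(2) by (auto simp: V_def E_def hprod_verts_def hprod_adj_def cycle_verts_def cycle_adj_def)
next
  fix x assume "x \<in> V" "E (i, y) x"
  then obtain a b where x: "x = (a, b)" "a \<in> cycle_verts w" "b \<in> {1..h}"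
    and "(a = i \<and> cycle_adj h y b) \<or> (b = y \<and> cycle_adj w i a)"
    by (cases x) (auto simp: V_def E_def hprod_verts_def hprod_adj_def cycle_verts_def)
  then have "a = i \<and> b = Suc y \<or> b \<in> {1..y}"
    using y by (auto simp: cycle_adj_def)
  then show "x = (i, Suc y) \<or> x \<in> A" using x A(2) by blast
qed

lemma hprod_forces_rows:
  fixes w h i y :: nat
  defines "V \<equiv> hprod_verts (cycle_verts w) (cycle_verts h)"
    and "E \<equiv> hprod_adj (cycle_adj w) {i} (cycle_adj h)"
  assumes w: "3 \<le> w" and i: "i \<in> cycle_verts w"
    and S: "{cycle_walk w i 1} \<times> cycle_verts h \<subseteq> S" "(i, 1) \<in> S" "(i, 2) \<in> S"
    and y: "2 \<le> y" "y \<le> h"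
  shows "forces V E S (S \<union> cycle_verts w \<times> {1..y})"
  using y
proof (induction y rule: nat_induct_at_least)
  case base
  have "forces V E S (S \<union> cycle_verts w \<times> {1} \<union> cycle_verts w \<times> {2})"
    unfolding V_def E_def
    by (intro hprod_forces_row hprod_forces_row[OF w i] forces_refl)
      (use w i S base in \<open>auto simp: cycle_verts_def\<close>)
  moreover have "S \<union> cycle_verts w \<times> {1} \<union> cycle_verts w \<times> {2} = S \<union> cycle_verts w \<times> {1..2}"
    by auto
  ultimately show ?case by simp
next
  case (Suc y)
  let ?A = "insert (i, Suc y) (S \<union> cycle_verts w \<times> {1..y})"
  have up: "forces V E S ?A"
    unfolding V_def E_def
    by (rule hprod_forces_root_up[OF i]) (use Suc in \<open>auto simp: V_def E_def\<close>)
  have "(cycle_walk w i 1, Suc y) \<in> ?A"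
    using S(1) Suc by (simp add: cycle_verts_def subset_iff)
  then have "forces V E S (?A \<union> cycle_verts w \<times> {Suc y})"
    unfolding V_def E_def
    by (intro hprod_forces_row[OF w i _ up[unfolded V_def E_def]]) (use Suc in \<open>auto simp: cycle_verts_def\<close>)
  moreover have "?A \<union> cycle_verts w \<times> {Suc y} = S \<union> cycle_verts w \<times> {1..Suc y}"
    using i by auto
  ultimately show ?case by simp
qed

theorem mainTheorem4:
  fixes h w i :: nat
  assumes "h \<ge> 4" and "w \<ge> 4" and "i \<in> {1..w}"
  shows "zero_forcing_number
           (hprod_verts (cycle_verts w) (cycle_verts h))
           (hprod_adj (cycle_adj w) {i} (cycle_adj h)) \<le> h + 2"
proof -
  let ?V = "hprod_verts (cycle_verts w) (cycle_verts h)"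
  let ?E = "hprod_adj (cycle_adj w) {i} (cycle_adj h)"
  define S where "S = insert (i, 1) (insert (i, 2) ({cycle_walk w i 1} \<times> cycle_verts h))"
  have i: "i \<in> cycle_verts w" using assms(3) by (simp add: cycle_verts_def)
  have "forces ?V ?E S (S \<union> cycle_verts w \<times> {1..h})"
    using assms by (intro hprod_forces_rows i) (auto simp: S_def)
  then have "forces ?V ?E S ?V"
    by (rule forces_subset) (simp add: hprod_verts_def cycle_verts_def)
  moreover have "S \<subseteq> ?V"
    using assms i cycle_walk_in[of w i 1] by (auto simp: S_def hprod_verts_def cycle_verts_def)
  moreover have "card S = h + 2"
    using cycle_walk_neq_start[OF i, of 1] assms by (simp add: S_def cycle_verts_def card_cartesian_product)
  ultimately show ?thesis by (metis zero_forcing_number_le)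
qed

end
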